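(* Let $k$ be a non-negative integer, $a_0,\dots,a_k\in\mathbb{C}$, and suppose $\Lambda=\sum_{i=0}^{k}a_i(Dx)^iD$ is a lowering operator. Let $\{B_n\}_{n\ge0}$ be a monic polynomial sequence with dual sequence $\{u_n\}_{n\ge0}$. The following statements are equivalent: (a) $\{B_n\}$ is $\Lambda$-Appell, i.e. $B^{[1]}_n(x;\Lambda)=B_n(x)$ for all $n\ge0$, where $B^{[1]}_n(x;\Lambda)=(n+1)^{-1}\big(\sum_{i=0}^{k}a_i(n+1)^i\big)^{-1}(\Lambda B_{n+1})(x)$; (b) ${}^t\Lambda(u_n)=\rho_nu_{n+1}$ for all $n\ge0$, where $\rho_n=(n+1)\sum_{i=0}^{k}a_i(n+1)^i$; (c) for all $n\ge0$, $u_n=(n!)^{-1}\Big(\prod_{s=1}^{n}\sum_{i=0}^{k}a_is^i\Big)^{-1}({}^t\Lambda)^nu_0$. Here ${}^t\Lambda=\sum_{i=0}^{k}a_i(-1)^{i+1}(Dx)^iD$ acting on forms.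
   Context: $\mathcal{P}$ is the space of complex polynomials, $\mathcal{P}'$ its algebraic dual, $\langle u,p\rangle$ the action of a form on a polynomial. $D$ is the derivative, $x$ multiplication by $x$, products are compositions. A lowering operator is a linear map $\mathcal{O}:\mathcal{P}\to\mathcal{P}$ with $\mathcal{O}(1)=0$ and $\deg\mathcal{O}(x^n)=n-1$, $n\ge1$. A monic polynomial sequence (MPS) is a sequence $\{B_n\}_{n\ge0}$ with $B_n$ monic of degree $n$; its dual sequence is the unique $\{u_n\}\subset\mathcal{P}'$ with $\langle u_n,B_m\rangle=\delta_{n,m}$. Transposes: $\langle {}^tT u,p\rangle=\langle u,Tp\rangle$; on forms $\langle Du,p\rangle=-\langle u,p'\rangle$ and $\langle xu,p\rangle=\langle u,xp\rangle$. *)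

theory Defs
  imports "HOL-Computational_Algebra.Polynomial"
begin

definition is_form :: "(complex poly \<Rightarrow> complex) \<Rightarrow> bool" where
  "is_form u \<longleftrightarrow> (\<forall>p q. u (p + q) = u p + u q) \<and> (\<forall>c p. u (smult c p) = c * u p)"

definition Dx :: "complex poly \<Rightarrow> complex poly" where
  "Dx p = pderiv ([:0, 1:] * p)"

definition Lambda_op :: "nat \<Rightarrow> (nat \<Rightarrow> complex) \<Rightarrow> complex poly \<Rightarrow> complex poly" where
  "Lambda_op k a p = (\<Sum>i=0..k. smult (a i) ((Dx ^^ i) (pderiv p)))"

definition lowering_op :: "(complex poly \<Rightarrow> complex poly) \<Rightarrow> bool" where
  "lowering_op L \<longleftrightarrow>
     (\<forall>p q. L (p + q) = L p + L q) \<and> (\<forall>c p. L (smult c p) = smult c (L p)) \<and>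
     L 1 = 0 \<and> (\<forall>n\<ge>1. L (monom 1 n) \<noteq> 0 \<and> degree (L (monom 1 n)) = n - 1)"

definition transp_op :: "(complex poly \<Rightarrow> complex poly) \<Rightarrow> (complex poly \<Rightarrow> complex) \<Rightarrow> (complex poly \<Rightarrow> complex)" where
  "transp_op T u = (\<lambda>p. u (T p))"

definition MPS :: "(nat \<Rightarrow> complex poly) \<Rightarrow> bool" where
  "MPS B \<longleftrightarrow> (\<forall>n. degree (B n) = n \<and> lead_coeff (B n) = 1)"

definition dual_seq :: "(nat \<Rightarrow> complex poly) \<Rightarrow> (nat \<Rightarrow> complex poly \<Rightarrow> complex) \<Rightarrow> bool" where
  "dual_seq B u \<longleftrightarrow> (\<forall>n. is_form (u n)) \<and> (\<forall>n m. u n (B m) = (if n = m then 1 else 0))"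

definition B1 :: "nat \<Rightarrow> (nat \<Rightarrow> complex) \<Rightarrow> (nat \<Rightarrow> complex poly) \<Rightarrow> nat \<Rightarrow> complex poly" where
  "B1 k a B n = smult (inverse (of_nat (n+1)) * inverse (\<Sum>i=0..k. a i * of_nat (n+1) ^ i))
                   (Lambda_op k a (B (n+1)))"

definition rho :: "nat \<Rightarrow> (nat \<Rightarrow> complex) \<Rightarrow> nat \<Rightarrow> complex" where
  "rho k a n = of_nat (n+1) * (\<Sum>i=0..k. a i * of_nat (n+1) ^ i)"

end

theory Submission
  imports Defs
begin

text \<open>Lambda is diagonal on monomials, Lambda x^(n+1) = rho n * x^n, so the lowering
  hypothesis forces every rho n to be nonzero. For any lowering operator L, expanding a
  polynomial p in the basis B as p = sum_m <u m, p> B m shows that L B(n+1) = r n * B n for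
  all n exactly when tL (u n) = r n * u (n+1) for all n. With nonzero r n this recurrence
  is solved by u n = (r 0 * ... * r (n-1))^-1 * tL^n (u 0), and
  rho 0 * ... * rho (n-1) = n! * prod_{s=1..n} sum_i a i * s^i.\<close>

lemma pderiv_monom_pred: "pderiv (monom c m) = monom (c * of_nat m) (m - 1)"
  by (cases m) (auto simp: pderiv_monom mult.commute)

lemma Dx_monom: "Dx (monom c j) = monom (c * of_nat (Suc j)) j"
proof -
  have "[:0, 1:] * monom c j = monom c (Suc j)"
    by (simp add: monom_Suc)
  then show ?thesis
    unfolding Dx_def by (simp add: pderiv_monom_pred)
qed

lemma funpow_Dx_monom: "(Dx ^^ i) (monom c j) = monom (c * of_nat (Suc j) ^ i) j"
  by (induction i) (auto simp: Dx_monom mult.assoc mult.commute)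

lemma Lambda_op_monom: "Lambda_op k a (monom 1 (Suc n)) = monom (rho k a n) n"
proof -
  have "Lambda_op k a (monom 1 (Suc n)) =
        (\<Sum>i=0..k. monom (a i * (of_nat (Suc n) * of_nat (Suc n) ^ i)) n)"
    unfolding Lambda_op_def by (simp add: pderiv_monom_pred funpow_Dx_monom smult_monom)
  also have "\<dots> = monom (\<Sum>i=0..k. a i * (of_nat (Suc n) * of_nat (Suc n) ^ i)) n"
    by (simp add: monom_sum)
  also have "(\<Sum>i=0..k. a i * (of_nat (Suc n) * of_nat (Suc n) ^ i)) = rho k a n"
    unfolding rho_def by (simp add: sum_distrib_left algebra_simps)
  finally show ?thesis .
qed

lemma rho_nonzero:
  assumes "lowering_op (Lambda_op k a)"
  shows "rho k a n \<noteq> 0"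
proof
  assume "rho k a n = 0"
  then have "Lambda_op k a (monom 1 (Suc n)) = 0"
    by (simp add: Lambda_op_monom)
  with assms show False
    unfolding lowering_op_def by auto
qed

lemma prod_rho: "(\<Prod>j<n. rho k a j) = fact n * (\<Prod>s=1..n. \<Sum>i=0..k. a i * of_nat s ^ i)"
  by (induction n) (simp_all add: rho_def prod.nat_ivl_Suc' fact_Suc algebra_simps)

lemma B1_eq_iff:
  assumes "rho k a n \<noteq> 0"
  shows "B1 k a B n = B n \<longleftrightarrow> Lambda_op k a (B (Suc n)) = smult (rho k a n) (B n)"
proof -
  have "B1 k a B n = smult (inverse (rho k a n)) (Lambda_op k a (B (Suc n)))"
    unfolding B1_def rho_def by (simp add: inverse_mult_distrib)
  with assms show ?thesis
    by (metis smult_smult right_inverse left_inverse smult_1_left)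
qed

lemma is_form_zero: "is_form u \<Longrightarrow> u 0 = 0"
  unfolding is_form_def by (metis mult_zero_left smult_0_left)

lemma is_form_sum: "is_form u \<Longrightarrow> u (\<Sum>m\<in>A. f m) = (\<Sum>m\<in>A. u (f m))"
  by (induction A rule: infinite_finite_induct) (auto simp: is_form_zero is_form_def)

lemma is_form_smult: "is_form u \<Longrightarrow> u (smult c p) = c * u p"
  unfolding is_form_def by blast

lemma lowering_op_zero: "lowering_op L \<Longrightarrow> L 0 = 0"
  unfolding lowering_op_def by (metis smult_0_left)

lemma lowering_op_sum: "lowering_op L \<Longrightarrow> L (\<Sum>m\<in>A. f m) = (\<Sum>m\<in>A. L (f m))"
  by (induction A rule: infinite_finite_induct) (auto simp: lowering_op_zero lowering_op_def)

lemma lowering_op_smult: "lowering_op L \<Longrightarrow> L (smult c p) = smult c (L p)"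
  unfolding lowering_op_def by blast

lemma degree_lowering_op_le:
  assumes "lowering_op L"
  shows "degree (L p) \<le> degree p - 1"
proof -
  have "L p = L (\<Sum>i\<le>degree p. smult (coeff p i) (monom 1 i))"
    by (simp add: smult_monom poly_as_sum_of_monoms)
  also have "\<dots> = (\<Sum>i\<le>degree p. smult (coeff p i) (L (monom 1 i)))"
    by (simp add: lowering_op_sum[OF assms] lowering_op_smult[OF assms])
  also have "degree \<dots> \<le> degree p - 1"
  proof (rule degree_sum_le)
    fix i assume "i \<in> {..degree p}"
    moreover have "degree (L (monom 1 i)) \<le> i - 1"
      using assms unfolding lowering_op_def by (cases "i = 0") (auto simp: one_pCons)
    ultimately show "degree (smult (coeff p i) (L (monom 1 i))) \<le> degree p - 1"
      using degree_smult_le[of "coeff p i" "L (monom 1 i)"] by fastforce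
  qed simp
  finally show ?thesis .
qed

lemma MPS_0: "MPS B \<Longrightarrow> B 0 = 1"
  unfolding MPS_def by (metis degree_0_id one_pCons)

lemma MPS_spans:
  assumes "MPS B" "degree p \<le> N"
  shows "\<exists>c. p = (\<Sum>m\<le>N. smult (c m) (B m))"
  using assms(2)
proof (induction N arbitrary: p)
  case 0
  then have "p = smult (coeff p 0) (B 0)"
    using degree_0_id[of p] MPS_0[OF assms(1)] by simp
  then show ?case by auto
next
  case (Suc N)
  define q where "q = p - smult (coeff p (Suc N)) (B (Suc N))"
  have B: "degree (B (Suc N)) = Suc N" "coeff (B (Suc N)) (Suc N) = 1"
    using assms(1) unfolding MPS_def by metis+
  have "degree q \<le> N"
  proof (rule degree_le, intro allI impI)
    fix i assume "N < i"
    then consider "i = Suc N" | "Suc N < i" by linarith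
    then show "coeff q i = 0"
      by cases (use B Suc.prems in \<open>simp_all add: q_def coeff_eq_0\<close>)
  qed
  then obtain c where "q = (\<Sum>m\<le>N. smult (c m) (B m))"
    using Suc.IH by blast
  then have "p = (\<Sum>m\<le>N. smult (c m) (B m)) + smult (coeff p (Suc N)) (B (Suc N))"
    by (simp add: q_def diff_eq_eq)
  then have "p = (\<Sum>m\<le>Suc N. smult ((c(Suc N := coeff p (Suc N))) m) (B m))"
    by simp
  then show ?case by blast
qed

lemma dual_seq_sum:
  assumes "dual_seq B u" "j \<le> N"
  shows "u j (\<Sum>m\<le>N. smult (c m) (B m)) = c j"
proof -
  have "u j (\<Sum>m\<le>N. smult (c m) (B m)) = (\<Sum>m\<le>N. c m * u j (B m))"
    using assms(1) unfolding dual_seq_def by (simp add: is_form_sum is_form_smult)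
  also have "\<dots> = (\<Sum>m\<le>N. if m = j then c m else 0)"
    using assms(1) unfolding dual_seq_def by (intro sum.cong) auto
  finally show ?thesis
    using assms(2) by simp
qed

lemma MPS_dual_expansion:
  assumes "MPS B" "dual_seq B u" "degree p \<le> N"
  shows "p = (\<Sum>m\<le>N. smult (u m p) (B m))"
proof -
  obtain c where c: "p = (\<Sum>m\<le>N. smult (c m) (B m))"
    using MPS_spans[OF assms(1,3)] by blast
  then have "\<And>m. m \<le> N \<Longrightarrow> u m p = c m"
    using dual_seq_sum[OF assms(2)] by simp
  with c show ?thesis
    by (metis (no_types, lifting) atMost_iff sum.cong)
qed

lemma dual_seq_form_expansion:
  assumes "MPS B" "dual_seq B u" "is_form v"
  shows "v p = (\<Sum>m\<le>degree p. u m p * v (B m))"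
  by (subst MPS_dual_expansion[OF assms(1,2) order_refl])
    (simp add: is_form_sum[OF assms(3)] is_form_smult[OF assms(3)])

lemma lowering_shift_iff_transp_shift:
  assumes L: "lowering_op L" and B: "MPS B" and u: "dual_seq B u"
  shows "(\<forall>n. L (B (Suc n)) = smult (r n) (B n)) \<longleftrightarrow>
         (\<forall>n. transp_op L (u n) = (\<lambda>p. r n * u (Suc n) p))"
proof -
  have form: "\<And>n. is_form (u n)" and ud: "\<And>n m. u n (B m) = (if n = m then 1 else 0)"
    using u unfolding dual_seq_def by auto
  show ?thesis
  proof
    assume shift: "\<forall>n. L (B (Suc n)) = smult (r n) (B n)"
    have "L (B 0) = 0"
      using L unfolding lowering_op_def MPS_0[OF B] by blast
    then have LB: "u n (L (B m)) = (if m = Suc n then r n else 0)" for n m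
      by (cases m) (simp_all add: shift ud is_form_smult[OF form] is_form_zero[OF form])
    show "\<forall>n. transp_op L (u n) = (\<lambda>p. r n * u (Suc n) p)"
    proof (intro allI ext)
      fix n and p :: "complex poly"
      let ?N = "degree p"
      have "transp_op L (u n) p = (\<Sum>m\<le>?N. u m p * u n (L (B m)))"
        unfolding transp_op_def
        by (subst MPS_dual_expansion[OF B u order_refl])
          (simp add: lowering_op_sum[OF L] lowering_op_smult[OF L] is_form_sum[OF form]
            is_form_smult[OF form])
      also have "\<dots> = r n * (\<Sum>m\<le>?N. u m p * u (Suc n) (B m))"
        by (simp add: LB ud sum_distrib_left) (intro sum.cong, auto)
      also have "\<dots> = r n * u (Suc n) p"
        by (simp only: dual_seq_form_expansion[OF B u form, of "Suc n" p, symmetric])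
      finally show "transp_op L (u n) p = r n * u (Suc n) p" .
    qed
  next
    assume shift: "\<forall>n. transp_op L (u n) = (\<lambda>p. r n * u (Suc n) p)"
    show "\<forall>n. L (B (Suc n)) = smult (r n) (B n)"
    proof
      fix n
      have deg: "degree (L (B (Suc n))) \<le> n"
        using degree_lowering_op_le[OF L, of "B (Suc n)"] B unfolding MPS_def by simp
      have coeff: "u m (L (B (Suc n))) = (if m = n then r n else 0)" for m
        using fun_cong[OF spec[OF shift, of m], of "B (Suc n)"] by (simp add: transp_op_def ud)
      have "L (B (Suc n)) = (\<Sum>m\<le>n. smult (u m (L (B (Suc n)))) (B m))"
        using MPS_dual_expansion[OF B u deg] .
      also have "\<dots> = (\<Sum>m\<le>n. if m = n then smult (r n) (B n) else 0)"
        by (intro sum.cong) (auto simp: coeff)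
      also have "\<dots> = smult (r n) (B n)"
        by simp
      finally show "L (B (Suc n)) = smult (r n) (B n)" .
    qed
  qed
qed

lemma transp_shift_iff_closed_form:
  assumes "\<And>n. r n \<noteq> (0 :: complex)"
  shows "(\<forall>n. transp_op L (u n) = (\<lambda>p. r n * u (Suc n) p)) \<longleftrightarrow>
         (\<forall>n. u n = (\<lambda>p. inverse (\<Prod>j<n. r j) * (transp_op L ^^ n) (u 0) p))"
proof
  assume shift: "\<forall>n. transp_op L (u n) = (\<lambda>p. r n * u (Suc n) p)"
  show "\<forall>n. u n = (\<lambda>p. inverse (\<Prod>j<n. r j) * (transp_op L ^^ n) (u 0) p)"
  proof
    fix n show "u n = (\<lambda>p. inverse (\<Prod>j<n. r j) * (transp_op L ^^ n) (u 0) p)"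
    proof (induction n)
      case 0
      show ?case by simp
    next
      case (Suc n)
      show ?case
      proof
        fix p :: "complex poly"
        have "r n * u (Suc n) p = u n (L p)"
          using fun_cong[OF spec[OF shift, of n], of p] by (simp add: transp_op_def)
        then have "u (Suc n) p = inverse (r n) * u n (L p)"
          using assms[of n] by (simp add: field_simps)
        then show "u (Suc n) p = inverse (\<Prod>j<Suc n. r j) * (transp_op L ^^ Suc n) (u 0) p"
          by (subst (asm) Suc.IH) (simp add: transp_op_def inverse_mult_distrib mult_ac)
      qed
    qed
  qed
next
  assume closed: "\<forall>n. u n = (\<lambda>p. inverse (\<Prod>j<n. r j) * (transp_op L ^^ n) (u 0) p)"
  show "\<forall>n. transp_op L (u n) = (\<lambda>p. r n * u (Suc n) p)"
  proof (intro allI ext)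
    fix n and p :: "complex poly"
    have "r n * inverse (\<Prod>j<Suc n. r j) = inverse (\<Prod>j<n. r j)"
      using assms[of n] by (simp add: inverse_mult_distrib)
    then show "transp_op L (u n) p = r n * u (Suc n) p"
      by (subst (1 2) closed[rule_format]) (simp add: transp_op_def mult.assoc[symmetric])
  qed
qed

theorem proposition5:
  fixes k :: nat and a :: "nat \<Rightarrow> complex"
    and B :: "nat \<Rightarrow> complex poly" and u :: "nat \<Rightarrow> complex poly \<Rightarrow> complex"
  assumes "lowering_op (Lambda_op k a)"
    and "MPS B"
    and "dual_seq B u"
  shows "((\<forall>n. B1 k a B n = B n) \<longleftrightarrow>
            (\<forall>n. transp_op (Lambda_op k a) (u n) = (\<lambda>p. rho k a n * u (Suc n) p)))
       \<and> ((\<forall>n. transp_op (Lambda_op k a) (u n) = (\<lambda>p. rho k a n * u (Suc n) p)) \<longleftrightarrow>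
            (\<forall>n. u n = (\<lambda>p. inverse (fact n) *
                     inverse (\<Prod>s=1..n. \<Sum>i=0..k. a i * of_nat s ^ i) *
                     ((transp_op (Lambda_op k a)) ^^ n) (u 0) p)))"
proof -
  have rho: "\<And>n. rho k a n \<noteq> 0"
    using rho_nonzero[OF assms(1)] .
  have "(\<forall>n. B1 k a B n = B n) \<longleftrightarrow>
        (\<forall>n. Lambda_op k a (B (Suc n)) = smult (rho k a n) (B n))"
    using B1_eq_iff[OF rho] by blast
  moreover note lowering_shift_iff_transp_shift[OF assms, of "rho k a"]
  moreover note transp_shift_iff_closed_form[OF rho, of "Lambda_op k a" u]
  ultimately show ?thesis
    by (simp add: prod_rho inverse_mult_distrib)
qed

end
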